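(* Let $N$ be a phylogenetic network on $X\subseteq[n]$ and let $i,j\in[n]$, $i\neq j$. Then $(i,j)$ is a reticulated-cherry of $N$ if and only if $(i,j)$ is a reticulated-cherry of the multiset $\boldsymbol\mu(N)$.
   Context: A (binary) phylogenetic network on a finite set $X\subseteq[n]=\{1,\dots,n\}$ is a directed acyclic graph $N=(V,A)$ without parallel arcs in which every node is exactly one of: the root (indegree 0, outdegree 1; there is exactly one), a leaf (indegree 1, outdegree 0), a tree node (indegree 1, outdegree 2), or a reticulation (indegree 2, outdegree 1); the leaves are identified with the elements of $X$. $V_T(N)$ denotes the set of leaves and tree nodes, $V_H(N)$ the set of reticulations. Paths are directed and trivial paths of length 0 are allowed; $m(u,v)$ denotes the number of directed paths from $u$ to $v$. Extended $\mu$-vectors: for $u\in V$ and $i\in[n]$, $\mu_i(u)=m(u,i)$ (which is $0$ if $i\notin X$), and $\mu_0(u)=\sum_{h\in V_H(N)} m(u,h)$; $\mu(u)=(\mu_0(u),\dots,\mu_n(u))$. The (extended) $\mu$-representation $\boldsymbol\mu(N)$ is the multiset $\{\mu(u)\mid u\in V_T(N)\}$, each vector counted with the number of nodes of $V_T(N)$ having it. For $S\subseteq\{0,\dots,n\}$, $\delta_S$ is the 0/1 indicator vector of $S$ indexed by $0,\dots,n$, and $\delta_{j_1,\dots,j_k}=\delta_{\{j_1,\dots,j_k\}}$. In a network, for distinct leaves $i,j$ with parents $p_i,p_j$, $(i,j)$ is a reticulated-cherry of $N$ if $p_i$ is a reticulation, $p_j$ is a tree node, and $p_j$ is a parent of $p_i$.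 For a finite multiset $\boldsymbol\mu$ of vectors of nonnegative integers indexed by $0,\dots,n$ and distinct $i,j\in[n]$, $(i,j)$ is a reticulated-cherry of $\boldsymbol\mu$ if $\delta_{0,i,j}$ belongs to $\boldsymbol\mu$ with multiplicity exactly $1$, and every element $\mu=(\mu_0,\dots,\mu_n)$ of $\boldsymbol\mu$ other than $\delta_i$ and $\delta_j$ satisfies $\mu_0\ge\mu_i\ge\mu_j$. *)

theory Defs
  imports Main "HOL-Library.Multiset"
begin

text \<open>A network is given by a vertex set V, an arc set A (a set, so no parallel
arcs), a leaf set X \<subseteq> [n] and an injective labelling lf mapping each label
i \<in> X to the leaf vertex identified with i.\<close>

definition indeg :: "('v \<times> 'v) set \<Rightarrow> 'v \<Rightarrow> nat" where
  "indeg A v = card {u. (u, v) \<in> A}"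

definition outdeg :: "('v \<times> 'v) set \<Rightarrow> 'v \<Rightarrow> nat" where
  "outdeg A v = card {w. (v, w) \<in> A}"

definition is_root :: "('v \<times> 'v) set \<Rightarrow> 'v \<Rightarrow> bool" where
  "is_root A v \<longleftrightarrow> indeg A v = 0 \<and> outdeg A v = 1"

definition is_leaf :: "('v \<times> 'v) set \<Rightarrow> 'v \<Rightarrow> bool" where
  "is_leaf A v \<longleftrightarrow> indeg A v = 1 \<and> outdeg A v = 0"

definition is_tree_node :: "('v \<times> 'v) set \<Rightarrow> 'v \<Rightarrow> bool" where
  "is_tree_node A v \<longleftrightarrow> indeg A v = 1 \<and> outdeg A v = 2"

definition is_ret :: "('v \<times> 'v) set \<Rightarrow> 'v \<Rightarrow> bool" where
  "is_ret A v \<longleftrightarrow> indeg A v = 2 \<and> outdeg A v = 1"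

definition phylo_network ::
  "nat \<Rightarrow> 'v set \<Rightarrow> ('v \<times> 'v) set \<Rightarrow> nat set \<Rightarrow> (nat \<Rightarrow> 'v) \<Rightarrow> bool" where
  "phylo_network n V A X lf \<longleftrightarrow>
     finite V \<and> A \<subseteq> V \<times> V \<and> acyclic A \<and> X \<subseteq> {1..n} \<and>
     (\<forall>v\<in>V. is_root A v \<or> is_leaf A v \<or> is_tree_node A v \<or> is_ret A v) \<and>
     (\<exists>!r. r \<in> V \<and> is_root A r) \<and>
     inj_on lf X \<and> lf ` X = {v \<in> V. is_leaf A v}"

text \<open>Directed paths as nonempty vertex lists (trivial paths allowed);
  m(u,v) is the number of directed paths from u to v.\<close>

definition npaths :: "('v \<times> 'v) set \<Rightarrow> 'v \<Rightarrow> 'v \<Rightarrow> nat" where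
  "npaths A u v = card {p. p \<noteq> [] \<and> hd p = u \<and> last p = v \<and>
                          successively (\<lambda>x y. (x, y) \<in> A) p}"

definition VT :: "'v set \<Rightarrow> ('v \<times> 'v) set \<Rightarrow> 'v set" where
  "VT V A = {v \<in> V. is_leaf A v \<or> is_tree_node A v}"

definition VH :: "'v set \<Rightarrow> ('v \<times> 'v) set \<Rightarrow> 'v set" where
  "VH V A = {v \<in> V. is_ret A v}"

text \<open>Vectors indexed by 0..n are represented as functions nat \<Rightarrow> nat which vanish
  beyond n.\<close>

definition mu_vec ::
  "nat \<Rightarrow> 'v set \<Rightarrow> ('v \<times> 'v) set \<Rightarrow> nat set \<Rightarrow> (nat \<Rightarrow> 'v) \<Rightarrow> 'v \<Rightarrow> (nat \<Rightarrow> nat)" where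
  "mu_vec n V A X lf u = (\<lambda>k.
     if k = 0 then (\<Sum>h\<in>VH V A. npaths A u h)
     else if k \<le> n \<and> k \<in> X then npaths A u (lf k)
     else 0)"

definition mu_rep ::
  "nat \<Rightarrow> 'v set \<Rightarrow> ('v \<times> 'v) set \<Rightarrow> nat set \<Rightarrow> (nat \<Rightarrow> 'v) \<Rightarrow> (nat \<Rightarrow> nat) multiset" where
  "mu_rep n V A X lf = image_mset (mu_vec n V A X lf) (mset_set (VT V A))"

definition delta :: "nat \<Rightarrow> nat set \<Rightarrow> (nat \<Rightarrow> nat)" where
  "delta n S = (\<lambda>k. if k \<le> n \<and> k \<in> S then 1 else 0)"

definition ret_cherry_net ::
  "'v set \<Rightarrow> ('v \<times> 'v) set \<Rightarrow> nat set \<Rightarrow> (nat \<Rightarrow> 'v) \<Rightarrow> nat \<Rightarrow> nat \<Rightarrow> bool" where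
  "ret_cherry_net V A X lf i j \<longleftrightarrow>
     i \<in> X \<and> j \<in> X \<and> i \<noteq> j \<and>
     (\<exists>pi pj. (pi, lf i) \<in> A \<and> (pj, lf j) \<in> A \<and>
        is_ret A pi \<and> is_tree_node A pj \<and> (pj, pi) \<in> A)"

definition ret_cherry_mset :: "nat \<Rightarrow> (nat \<Rightarrow> nat) multiset \<Rightarrow> nat \<Rightarrow> nat \<Rightarrow> bool" where
  "ret_cherry_mset n M i j \<longleftrightarrow>
     count M (delta n {0, i, j}) = 1 \<and>
     (\<forall>m \<in># M. m \<noteq> delta n {i} \<and> m \<noteq> delta n {j} \<longrightarrow> m i \<le> m 0 \<and> m j \<le> m i)"

end

theory Submission
  imports Defs
begin

text \<open>All coordinates of \<mu>(u) obey one recursion: \<mu>(u) is the sum of \<mu> over the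
  children of u, plus \<delta>_0 if u is a reticulation and \<delta>_k if u is leaf k. Hence the
  tree-node parent w of a reticulated cherry (i, j) has \<mu>(w) = \<delta>_{0,i,j}. Conversely, a
  vertex of V_T with this vector is a tree node each of whose children reaches some
  leaf, and the entries leave room below each child for a single leaf and below one of
  them for a single reticulation: the vertex is the parent of a reticulated cherry (i, j)
  or (j, i). In the first case it is the parent of leaf j, hence unique. Every vertex
  other than the leaves i and j reaches i only through the reticulation p_i and j only
  through p_j, a parent of p_i, so \<mu>_0 \<ge> \<mu>_i \<ge> \<mu>_j. In the case (j, i) the child of the
  root violates \<mu>_i \<ge> \<mu>_j: it reaches the reticulation above j through both of its
  parents, but i only through one of them.\<close>

section \<open>Counting directed paths\<close>

definition paths :: "('v \<times> 'v) set \<Rightarrow> 'v \<Rightarrow> 'v \<Rightarrow> 'v list set" where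
  "paths R u v = {p. p \<noteq> [] \<and> hd p = u \<and> last p = v \<and> successively (\<lambda>x y. (x, y) \<in> R) p}"

lemma npaths_eq_card_paths: "npaths R u v = card (paths R u v)"
  unfolding npaths_def paths_def ..

lemma finite_successors: "finite R \<Longrightarrow> finite {w. (u, w) \<in> R}"
  using finite_Image[of R "{u}"] by (simp add: Image_singleton)

lemma finite_predecessors: "finite R \<Longrightarrow> finite {w. (w, u) \<in> R}"
  using finite_successors[of "R\<inverse>" u] by simp

lemma paths_unfold:
  "paths R u v = (if u = v then {[u]} else {}) \<union> (\<Union>w\<in>{w. (u, w) \<in> R}. (#) u ` paths R w v)"
proof (rule set_eqI)
  fix p
  show "p \<in> paths R u v \<longleftrightarrow> p \<in> (if u = v then {[u]} else {}) \<union> (\<Union>w\<in>{w. (u, w) \<in> R}. (#) u ` paths R w v)"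
  proof
    assume "p \<in> paths R u v"
    then obtain q where p: "p = u # q" "last p = v" "successively (\<lambda>x y. (x, y) \<in> R) p"
      unfolding paths_def by (cases p) auto
    then show "p \<in> (if u = v then {[u]} else {}) \<union> (\<Union>w\<in>{w. (u, w) \<in> R}. (#) u ` paths R w v)"
      by (cases q) (auto simp: paths_def)
  qed (auto split: if_splits simp: paths_def successively_Cons)
qed

lemma finite_paths:
  assumes "finite R" "acyclic R"
  shows "finite (paths R u v)"
proof (induction u rule: wf_induct_rule[OF finite_acyclic_wf_converse[OF assms]])
  case (1 u)
  then show ?case
    using finite_successors[OF assms(1), of u] by (subst paths_unfold) simp
qed

lemma npaths_unfold:
  assumes "finite R" "acyclic R"
  shows "npaths R u v = of_bool (u = v) + (\<Sum>w\<in>{w. (u, w) \<in> R}. npaths R w v)"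
proof -
  have fin: "finite {w. (u, w) \<in> R}" "\<And>w. finite (paths R w v)"
    using finite_successors[OF assms(1)] finite_paths[OF assms] by auto
  have "npaths R u v = card (if u = v then {[u]} else {}) + card (\<Union>w\<in>{w. (u, w) \<in> R}. (#) u ` paths R w v)"
    unfolding npaths_eq_card_paths
    by (subst paths_unfold, rule card_Un_disjoint) (use fin in \<open>auto simp: paths_def\<close>)
  also have "card (\<Union>w\<in>{w. (u, w) \<in> R}. (#) u ` paths R w v) = (\<Sum>w\<in>{w. (u, w) \<in> R}. card ((#) u ` paths R w v))"
    by (rule card_UN_disjoint) (use fin in \<open>auto simp: paths_def\<close>)
  finally show ?thesis
    by (simp add: npaths_eq_card_paths card_image)
qed

lemma npaths_converse: "npaths R u v = npaths (R\<inverse>) v u"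
proof -
  have "paths R u v = rev ` paths (R\<inverse>) v u"
    unfolding paths_def
    by (rule set_eqI, rule iffI, rule image_eqI[of _ _ "rev _"]) (auto simp: hd_rev last_rev)
  then show ?thesis by (simp add: npaths_eq_card_paths card_image)
qed

lemma npaths_unfold_predecessors:
  assumes "finite R" "acyclic R" "u \<noteq> v"
  shows "npaths R u v = (\<Sum>w\<in>{w. (w, v) \<in> R}. npaths R u w)"
  using npaths_unfold[of "R\<inverse>" v u] assms by (simp add: npaths_converse[of R])

lemma npaths_pos_iff_rtrancl:
  assumes "finite R" "acyclic R"
  shows "0 < npaths R u v \<longleftrightarrow> (u, v) \<in> R\<^sup>*"
proof
  assume "0 < npaths R u v"
  then obtain p where "p \<in> paths R u v"
    by (metis card.empty ex_in_conv less_irrefl npaths_eq_card_paths)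
  then show "(u, v) \<in> R\<^sup>*"
  proof (induction p arbitrary: u)
    case (Cons a q)
    then show ?case
      by (cases q) (auto simp: paths_def intro: converse_rtrancl_into_rtrancl)
  qed (simp add: paths_def)
next
  assume "(u, v) \<in> R\<^sup>*"
  then show "0 < npaths R u v"
  proof (induction rule: converse_rtrancl_induct)
    case base
    then show ?case by (subst npaths_unfold[OF assms]) simp
  next
    case (step u w)
    have "npaths R w v \<le> (\<Sum>w\<in>{w. (u, w) \<in> R}. npaths R w v)"
      by (rule member_le_sum) (use step finite_successors[OF assms(1)] in auto)
    with step show ?case by (subst npaths_unfold[OF assms]) simp
  qed
qed

lemma npaths_mono_arc:
  assumes "finite R" "acyclic R" "(w, h) \<in> R"
  shows "npaths R u w \<le> npaths R u h"
proof (cases "u = h")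
  case True
  have "(h, w) \<notin> R\<^sup>*"
    using assms(2,3) unfolding acyclic_def by (meson rtrancl_into_trancl1)
  then have "npaths R h w = 0"
    using npaths_pos_iff_rtrancl[OF assms(1,2), of h w] by simp
  then show ?thesis using True by simp
next
  case False
  have "npaths R u w \<le> (\<Sum>p\<in>{p. (p, h) \<in> R}. npaths R u p)"
    by (rule member_le_sum) (use assms finite_predecessors in auto)
  then show ?thesis
    using npaths_unfold_predecessors[OF assms(1,2) False] by simp
qed

section \<open>Reticulated cherries in phylogenetic networks\<close>

definition ret_cherry_at :: "('v \<times> 'v) set \<Rightarrow> nat set \<Rightarrow> (nat \<Rightarrow> 'v) \<Rightarrow> 'v \<Rightarrow> nat \<Rightarrow> nat \<Rightarrow> bool" where
  "ret_cherry_at A X lf w i j \<longleftrightarrow> i \<in> X \<and> j \<in> X \<and> is_tree_node A w \<and> (w, lf j) \<in> A \<and>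
     (\<exists>h. (w, h) \<in> A \<and> is_ret A h \<and> (h, lf i) \<in> A)"

lemma ret_cherry_net_iff: "ret_cherry_net V A X lf i j \<longleftrightarrow> i \<noteq> j \<and> (\<exists>w. ret_cherry_at A X lf w i j)"
  unfolding ret_cherry_net_def ret_cherry_at_def by blast

locale phylo_net =
  fixes n :: nat and V :: "'v set" and A :: "('v \<times> 'v) set" and X :: "nat set" and lf :: "nat \<Rightarrow> 'v"
  assumes phylo_network: "phylo_network n V A X lf"
begin

abbreviation mu :: "'v \<Rightarrow> nat \<Rightarrow> nat" where
  "mu \<equiv> mu_vec n V A X lf"

lemma finite_V: "finite V"
  and arcs_subset: "A \<subseteq> V \<times> V"
  and acyclic_A: "acyclic A"
  and labels_subset: "X \<subseteq> {1..n}"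
  and node_kinds: "v \<in> V \<Longrightarrow> is_root A v \<or> is_leaf A v \<or> is_tree_node A v \<or> is_ret A v"
  and unique_root: "\<exists>!r. r \<in> V \<and> is_root A r"
  and inj_lf: "inj_on lf X"
  and leaves_eq: "lf ` X = {v \<in> V. is_leaf A v}"
  using phylo_network unfolding phylo_network_def by auto

lemma finite_A: "finite A"
  using finite_subset[OF arcs_subset] finite_V by blast

lemma arc_in_V: "(u, v) \<in> A \<Longrightarrow> u \<in> V \<and> v \<in> V"
  using arcs_subset by auto

lemma node_kinds_disjoint:
  "\<not> (is_leaf A v \<and> is_tree_node A v)" "\<not> (is_leaf A v \<and> is_ret A v)"
  "\<not> (is_leaf A v \<and> is_root A v)" "\<not> (is_tree_node A v \<and> is_ret A v)"
  "\<not> (is_tree_node A v \<and> is_root A v)" "\<not> (is_ret A v \<and> is_root A v)"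
  unfolding is_leaf_def is_tree_node_def is_ret_def is_root_def by auto

lemma leaf_children: "is_leaf A v \<Longrightarrow> {w. (v, w) \<in> A} = {}"
  using finite_successors[OF finite_A, of v] unfolding is_leaf_def outdeg_def by auto

lemma root_parents: "is_root A v \<Longrightarrow> {w. (w, v) \<in> A} = {}"
  using finite_predecessors[OF finite_A, of v] unfolding is_root_def indeg_def by auto

lemma single_child:
  assumes "is_root A v \<or> is_ret A v" "(v, w) \<in> A"
  shows "{u. (v, u) \<in> A} = {w}"
proof -
  obtain u where "{u. (v, u) \<in> A} = {u}"
    using assms(1) unfolding is_root_def is_ret_def outdeg_def
    by (auto simp: card_1_singleton_iff)
  with assms(2) show ?thesis by auto
qed

lemma tree_node_children: "is_tree_node A v \<Longrightarrow> \<exists>w1 w2. {w. (v, w) \<in> A} = {w1, w2} \<and> w1 \<noteq> w2"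
  unfolding is_tree_node_def outdeg_def by (simp add: card_2_iff)

lemma tree_node_children_eq:
  assumes "is_tree_node A v" "(v, a) \<in> A" "(v, b) \<in> A" "a \<noteq> b"
  shows "{w. (v, w) \<in> A} = {a, b}"
proof -
  obtain w1 w2 where w: "{w. (v, w) \<in> A} = {w1, w2}" using tree_node_children[OF assms(1)] by blast
  then have "a \<in> {w1, w2}" "b \<in> {w1, w2}" using assms(2,3) by blast+
  with w assms(4) show ?thesis by auto
qed

lemma ret_parents: "is_ret A v \<Longrightarrow> \<exists>p1 p2. {w. (w, v) \<in> A} = {p1, p2} \<and> p1 \<noteq> p2"
  unfolding is_ret_def indeg_def by (simp add: card_2_iff)

lemma ret_other_parent:
  assumes "is_ret A h" "(u, h) \<in> A"
  obtains q where "q \<noteq> u" "{p. (p, h) \<in> A} = {u, q}"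
proof -
  obtain p1 p2 where p: "{p. (p, h) \<in> A} = {p1, p2}" "p1 \<noteq> p2"
    using ret_parents[OF assms(1)] by blast
  then have "u = p1 \<or> u = p2" using assms(2) by blast
  then show ?thesis
    using that[of p2] that[of p1] p by (auto simp: insert_commute)
qed

lemma single_parent:
  assumes "is_leaf A v \<or> is_tree_node A v" "(p, v) \<in> A"
  shows "{w. (w, v) \<in> A} = {p}"
proof -
  obtain q where "{w. (w, v) \<in> A} = {q}"
    using assms(1) unfolding is_leaf_def is_tree_node_def indeg_def
    by (auto simp: card_1_singleton_iff)
  with assms(2) show ?thesis by auto
qed

lemma has_parent:
  assumes "v \<in> V" "\<not> is_root A v"
  shows "\<exists>p. (p, v) \<in> A"
proof -
  have "indeg A v \<noteq> 0"
    using node_kinds[OF assms(1)] assms(2) by (auto simp: is_leaf_def is_tree_node_def is_ret_def)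
  then have "{p. (p, v) \<in> A} \<noteq> {}" unfolding indeg_def by force
  then show ?thesis by blast
qed

lemma has_child:
  assumes "v \<in> V" "\<not> is_leaf A v"
  shows "\<exists>w. (v, w) \<in> A"
proof -
  have "outdeg A v \<noteq> 0"
    using node_kinds[OF assms(1)] assms(2) by (auto simp: is_root_def is_tree_node_def is_ret_def)
  then have "{w. (v, w) \<in> A} \<noteq> {}" unfolding outdeg_def by force
  then show ?thesis by blast
qed

lemma lf_leaf: "k \<in> X \<Longrightarrow> lf k \<in> V \<and> is_leaf A (lf k)"
  using leaves_eq by auto

lemma leaf_eq_lf: "v \<in> V \<Longrightarrow> is_leaf A v \<Longrightarrow> \<exists>k\<in>X. v = lf k"
  using leaves_eq by auto

lemma label_range: "k \<in> X \<Longrightarrow> 0 < k \<and> k \<le> n"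
  using labels_subset by auto

lemma leaf_rtrancl: "is_leaf A v \<Longrightarrow> (v, w) \<in> A\<^sup>* \<Longrightarrow> w = v"
  using leaf_children by (auto elim: converse_rtranclE)

lemma reaches_leaf: "v \<in> V \<Longrightarrow> \<exists>k\<in>X. (v, lf k) \<in> A\<^sup>*"
proof (induction v rule: wf_induct_rule[OF finite_acyclic_wf_converse[OF finite_A acyclic_A]])
  case (1 v)
  show ?case
  proof (cases "is_leaf A v")
    case True
    then show ?thesis using leaf_eq_lf[OF 1(2)] by auto
  next
    case False
    then obtain w where w: "(v, w) \<in> A" using has_child[OF 1(2)] by blast
    then obtain k where "k \<in> X" "(w, lf k) \<in> A\<^sup>*" using 1(1) arc_in_V by blast
    with w show ?thesis by (meson converse_rtrancl_into_rtrancl)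
  qed
qed

lemma root_reaches: "r \<in> V \<Longrightarrow> is_root A r \<Longrightarrow> v \<in> V \<Longrightarrow> (r, v) \<in> A\<^sup>*"
proof (induction v rule: wf_induct_rule[OF finite_acyclic_wf[OF finite_A acyclic_A]])
  case (1 v)
  show ?case
  proof (cases "is_root A v")
    case True
    then show ?thesis using unique_root 1(2-4) by auto
  next
    case False
    then obtain p where p: "(p, v) \<in> A" using has_parent[OF 1(4)] by blast
    then have "(r, p) \<in> A\<^sup>*" using 1 arc_in_V by blast
    then show ?thesis using p by (rule rtrancl_into_rtrancl)
  qed
qed

lemma root_child_reaches:
  assumes "r \<in> V" "is_root A r" "{w. (r, w) \<in> A} = {t}" "v \<in> V" "v \<noteq> r"
  shows "(t, v) \<in> A\<^sup>*"
proof -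
  have "(r, v) \<in> A\<^sup>+"
    using root_reaches[OF assms(1,2,4)] assms(5) by (auto simp: rtrancl_eq_or_trancl)
  then obtain w where "(r, w) \<in> A" "(w, v) \<in> A\<^sup>*" by (metis tranclD)
  with assms(3) show ?thesis by auto
qed

text \<open>A reticulation t below the root would have a second parent, which lies below t.\<close>

lemma root_child_in_VT:
  assumes "r \<in> V" "is_root A r" "{w. (r, w) \<in> A} = {t}"
  shows "t \<in> VT V A"
proof -
  have rt: "(r, t) \<in> A" using assms(3) by auto
  have "\<not> is_ret A t"
  proof
    assume "is_ret A t"
    then obtain p where "p \<noteq> r" "{w. (w, t) \<in> A} = {r, p}" using ret_other_parent rt by blast
    then have p: "(p, t) \<in> A" "p \<noteq> r" by blast+
    then have "(t, p) \<in> A\<^sup>*" using root_child_reaches[OF assms] arc_in_V by blast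
    with p(1) acyclic_A show False unfolding acyclic_def by (meson rtrancl_into_trancl1)
  qed
  moreover have "\<not> is_root A t" using root_parents rt by blast
  moreover have "t \<in> V" using arc_in_V[OF rt] by blast
  ultimately show ?thesis using node_kinds[of t] by (simp add: VT_def)
qed

section \<open>Extended \<mu>-vectors\<close>

lemma mu_label: "k \<in> X \<Longrightarrow> mu u k = npaths A u (lf k)"
  using label_range[of k] by (simp add: mu_vec_def)

lemma mu_unlabelled: "k \<noteq> 0 \<Longrightarrow> k \<notin> X \<Longrightarrow> mu u k = 0"
  by (simp add: mu_vec_def)

lemma mu_zero: "mu u 0 = (\<Sum>h\<in>VH V A. npaths A u h)"
  by (simp add: mu_vec_def)

lemma finite_VH: "finite (VH V A)"
  using finite_V by (simp add: VH_def)

lemma mu_unfold: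
  "mu u k = (if k = 0 then of_bool (u \<in> VH V A) else of_bool (k \<in> X \<and> u = lf k))
            + (\<Sum>w\<in>{w. (u, w) \<in> A}. mu w k)"
proof (cases "k = 0")
  case True
  have "mu u k = (\<Sum>h\<in>VH V A. of_bool (u = h) + (\<Sum>w\<in>{w. (u, w) \<in> A}. npaths A w h))"
    using True by (simp add: mu_zero npaths_unfold[OF finite_A acyclic_A, of u])
  also have "\<dots> = of_bool (u \<in> VH V A) + (\<Sum>w\<in>{w. (u, w) \<in> A}. \<Sum>h\<in>VH V A. npaths A w h)"
    using finite_VH by (simp add: sum.distrib sum.swap[of _ "VH V A"] of_bool_def)
  finally show ?thesis
    using True by (simp add: mu_zero)
next
  case False
  then show ?thesis
    by (cases "k \<in> X") (simp_all add: mu_label npaths_unfold[OF finite_A acyclic_A, of u] mu_unlabelled)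
qed

lemma npaths_le_mu_zero: "h \<in> VH V A \<Longrightarrow> npaths A u h \<le> mu u 0"
  unfolding mu_zero by (rule member_le_sum) (use finite_VH in auto)

lemma mu_leaf: "k \<in> X \<Longrightarrow> mu (lf k) = delta n {k}"
proof
  fix m assume k: "k \<in> X"
  have "is_leaf A (lf k)" "lf k \<notin> VH V A"
    using lf_leaf[OF k] node_kinds_disjoint by (auto simp: VH_def)
  then show "mu (lf k) m = delta n {k} m"
    using label_range[OF k] leaf_children inj_lf k unfolding delta_def
    by (subst mu_unfold) (auto dest: inj_onD)
qed

lemma mu_tree_node:
  assumes "is_tree_node A u" "{w. (u, w) \<in> A} = {w1, w2}" "w1 \<noteq> w2"
  shows "mu u k = mu w1 k + mu w2 k"
proof -
  have "u \<notin> VH V A" "\<And>k. k \<in> X \<Longrightarrow> u \<noteq> lf k"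
    using assms(1) lf_leaf node_kinds_disjoint by (auto simp: VH_def)
  then show ?thesis
    using assms(2,3) by (subst mu_unfold) simp
qed

lemma mu_ret:
  assumes "h \<in> V" "is_ret A h" "{w. (h, w) \<in> A} = {w}"
  shows "mu h k = of_bool (k = 0) + mu w k"
proof -
  have "h \<in> VH V A" "\<And>k. k \<in> X \<Longrightarrow> h \<noteq> lf k"
    using assms(1,2) lf_leaf node_kinds_disjoint by (auto simp: VH_def)
  then show ?thesis
    using assms(3) label_range by (subst mu_unfold) auto
qed

lemma mu_label_pos:
  assumes "v \<in> V"
  shows "\<exists>k\<in>X. 0 < mu v k"
proof -
  obtain k where "k \<in> X" "(v, lf k) \<in> A\<^sup>*" using reaches_leaf[OF assms] by blast
  then show ?thesis
    using npaths_pos_iff_rtrancl[OF finite_A acyclic_A] mu_label by auto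
qed

text \<open>The hypothesis \<open>\<forall>m\<in>X. mu v m \<le> of_bool (m = k)\<close> says that leaf k is the only leaf
  below v and that it is reached by at most one path.\<close>

lemma not_tree_node_if_single_label:
  assumes "v \<in> V" "\<forall>m\<in>X. mu v m \<le> of_bool (m = k)"
  shows "\<not> is_tree_node A v"
proof
  assume "is_tree_node A v"
  then obtain w1 w2 where w: "{w. (v, w) \<in> A} = {w1, w2}" "w1 \<noteq> w2"
    using tree_node_children by blast
  then have "w1 \<in> V" "w2 \<in> V" using arc_in_V by blast+
  then obtain k1 k2 where k: "k1 \<in> X" "0 < mu w1 k1" "k2 \<in> X" "0 < mu w2 k2"
    using mu_label_pos by meson
  have sum: "\<And>m. mu v m = mu w1 m + mu w2 m"
    using mu_tree_node[OF \<open>is_tree_node A v\<close> w] .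
  have "mu v k1 \<le> of_bool (k1 = k)" "mu v k2 \<le> of_bool (k2 = k)"
    using assms(2) k by blast+
  then have "k1 = k" "k2 = k"
    using k sum[of k1] sum[of k2] by (auto simp: of_bool_def split: if_splits)
  then show False
    using \<open>mu v k1 \<le> of_bool (k1 = k)\<close> k sum[of k] by simp
qed

lemma eq_lf_if_single_label:
  assumes "v \<in> V" "\<not> is_root A v" "mu v 0 = 0" "\<forall>m\<in>X. mu v m \<le> of_bool (m = k)"
  shows "v = lf k"
proof -
  have "\<not> is_ret A v"
  proof
    assume ret: "is_ret A v"
    then obtain w where "(v, w) \<in> A" using has_child[OF assms(1)] node_kinds_disjoint by blast
    then have "mu v 0 = 1 + mu w 0" using mu_ret[OF assms(1) ret] single_child ret by simp
    with assms(3) show False by simp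
  qed
  then have "is_leaf A v"
    using node_kinds[OF assms(1)] assms(2) not_tree_node_if_single_label[OF assms(1,4)] by blast
  then obtain k' where k': "k' \<in> X" "v = lf k'" using leaf_eq_lf[OF assms(1)] by blast
  then have "mu v k' = 1" using mu_leaf label_range[of k'] by (simp add: delta_def)
  moreover have "mu v k' \<le> of_bool (k' = k)" using assms(4) k' by blast
  ultimately have "k' = k" by (cases "k' = k") simp_all
  with k' show ?thesis by simp
qed

lemma ret_parent_of_lf_if_single_label:
  assumes "v \<in> V" "\<not> is_root A v" "mu v 0 = 1" "\<forall>m\<in>X. mu v m \<le> of_bool (m = k)"
  shows "is_ret A v \<and> (v, lf k) \<in> A"
proof -
  have "\<not> is_leaf A v"
  proof
    assume "is_leaf A v"
    then obtain k' where "k' \<in> X" "v = lf k'" using leaf_eq_lf[OF assms(1)] by blast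
    with assms(3) show False using mu_leaf label_range[of k'] by (simp add: delta_def)
  qed
  then have ret: "is_ret A v"
    using node_kinds[OF assms(1)] assms(2) not_tree_node_if_single_label[OF assms(1,4)] by blast
  then obtain w where vw: "(v, w) \<in> A" using has_child[OF assms(1)] node_kinds_disjoint by blast
  have mu_w: "mu v m = of_bool (m = 0) + mu w m" for m
    using mu_ret[OF assms(1) ret] single_child ret vw by simp
  have "w = lf k"
  proof (rule eq_lf_if_single_label)
    show "w \<in> V" "\<not> is_root A w"
      using vw arc_in_V root_parents by blast+
    show "mu w 0 = 0" using assms(3) mu_w[of 0] by simp
    show "\<forall>m\<in>X. mu w m \<le> of_bool (m = k)"
      using assms(4) mu_w label_range by fastforce
  qed
  with ret vw show ?thesis by simp
qed

section \<open>Reticulated cherries of the \<mu>-representation\<close>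

lemma count_mu_rep: "count (mu_rep n V A X lf) x = card {u \<in> VT V A. mu u = x}"
proof -
  have "finite (VT V A)" using finite_V by (simp add: VT_def)
  then show ?thesis
    unfolding mu_rep_def count_image_mset' by (simp add: eq_commute)
qed

lemma mu_ret_cherry_at:
  assumes "ret_cherry_at A X lf w i j" "i \<noteq> j"
  shows "mu w = delta n {0, i, j}"
proof
  fix k
  obtain h where ij: "i \<in> X" "j \<in> X" and w: "is_tree_node A w" "(w, lf j) \<in> A" "(w, h) \<in> A"
    and h: "is_ret A h" "(h, lf i) \<in> A"
    using assms(1) unfolding ret_cherry_at_def by blast
  have "lf j \<noteq> h" using lf_leaf[OF ij(2)] h(1) node_kinds_disjoint by blast
  moreover have "{v. (w, v) \<in> A} = {lf j, h}"
    using tree_node_children_eq[OF w(1)] w(2,3) \<open>lf j \<noteq> h\<close> .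
  moreover have "{v. (h, v) \<in> A} = {lf i}"
    using single_child h by blast
  ultimately have "mu w k = delta n {j} k + (of_bool (k = 0) + delta n {i} k)"
    using mu_tree_node[OF w(1)] mu_leaf ij mu_ret[OF _ h(1)] arc_in_V[OF w(3)] by simp
  then show "mu w k = delta n {0, i, j} k"
    using label_range[OF ij(1)] label_range[OF ij(2)] assms(2) by (auto simp: delta_def)
qed

lemma children_split_if_mu_eq_delta:
  assumes "u \<in> VT V A" "mu u = delta n {0, i, j}"
  obtains c c' where "is_tree_node A u" "{v. (u, v) \<in> A} = {c, c'}" "mu c 0 = 0" "mu c' 0 = 1"
    "\<And>m. mu c m + mu c' m = delta n {0, i, j} m"
proof -
  have uV: "u \<in> V" using assms(1) by (simp add: VT_def)
  have "\<not> is_leaf A u"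
  proof
    assume "is_leaf A u"
    then obtain k where "k \<in> X" "u = lf k" using leaf_eq_lf[OF uV] by blast
    then have "mu u 0 = 0" using mu_leaf label_range[of k] by (simp add: delta_def)
    with assms(2) show False by (simp add: delta_def)
  qed
  then have tree: "is_tree_node A u" using assms(1) by (simp add: VT_def)
  obtain c1 c2 where c12: "{v. (u, v) \<in> A} = {c1, c2}" "c1 \<noteq> c2"
    using tree_node_children[OF tree] by blast
  have sum12: "mu c1 m + mu c2 m = delta n {0, i, j} m" for m
    using mu_tree_node[OF tree c12] assms(2) by simp
  show ?thesis
  proof (cases "mu c1 0 = 0")
    case True
    then show ?thesis using that[of c1 c2] tree c12 sum12 sum12[of 0] by (simp add: delta_def)
  next
    case False
    then have "mu c1 0 = 1" "mu c2 0 = 0" using sum12[of 0] by (auto simp: delta_def)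
    moreover have "mu c2 m + mu c1 m = delta n {0, i, j} m" for m using sum12[of m] by simp
    ultimately show ?thesis using that[of c2 c1] tree c12 by (simp add: insert_commute)
  qed
qed

lemma single_label_if_sum_eq_delta:
  assumes "\<And>m. mu x m + mu y m = delta n {0, i, j} m" "0 < mu y l'" "{l, l'} = {i, j}"
  shows "\<forall>m\<in>X. mu x m \<le> of_bool (m = l)"
proof
  fix m assume "m \<in> X"
  then have "m \<noteq> 0" using label_range by blast
  then show "mu x m \<le> of_bool (m = l)"
    using assms(2,3) assms(1)[of m] assms(1)[of l']
    by (auto simp: delta_def of_bool_def split: if_splits)
qed

lemma ret_cherry_at_if_mu_eq_delta:
  assumes "u \<in> VT V A" "mu u = delta n {0, i, j}"
  shows "ret_cherry_at A X lf u i j \<or> ret_cherry_at A X lf u j i"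
proof -
  obtain c c' where tree: "is_tree_node A u" and cc: "{v. (u, v) \<in> A} = {c, c'}"
    "mu c 0 = 0" "mu c' 0 = 1" and sum: "\<And>m. mu c m + mu c' m = delta n {0, i, j} m"
    using children_split_if_mu_eq_delta[OF assms] by blast
  have arcs: "(u, c) \<in> A" "(u, c') \<in> A" using cc(1) by blast+
  then have cV: "c \<in> V" "c' \<in> V" "\<not> is_root A c" "\<not> is_root A c'"
    using arc_in_V root_parents by blast+
  obtain k k' where k: "k \<in> X" "0 < mu c k" "k' \<in> X" "0 < mu c' k'"
    using mu_label_pos[OF cV(1)] mu_label_pos[OF cV(2)] by blast
  have kk: "k = i \<or> k = j" "k' = i \<or> k' = j" "k \<noteq> k'"
    using sum[of k] sum[of k'] k label_range[of k] label_range[of k']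
    by (auto simp: delta_def of_bool_def split: if_splits)
  then have "{k, k'} = {i, j}" "{k', k} = {i, j}" by auto
  then have "\<forall>m\<in>X. mu c m \<le> of_bool (m = k)" "\<forall>m\<in>X. mu c' m \<le> of_bool (m = k')"
    using single_label_if_sum_eq_delta[of c c'] single_label_if_sum_eq_delta[of c' c] sum k
    by (simp_all add: add.commute)
  then have "c = lf k" "is_ret A c' \<and> (c', lf k') \<in> A"
    using eq_lf_if_single_label[OF cV(1,3) cc(2)] ret_parent_of_lf_if_single_label[OF cV(2,4) cc(3)]
    by blast+
  then have "ret_cherry_at A X lf u k' k"
    unfolding ret_cherry_at_def using k tree arcs by blast
  with kk show ?thesis by blast
qed

lemma ret_cherry_at_unique:
  assumes "ret_cherry_at A X lf w i j" "ret_cherry_at A X lf u i j \<or> ret_cherry_at A X lf u j i"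
  shows "u = w"
proof -
  obtain h where ij: "i \<in> X" "j \<in> X" and "(w, lf j) \<in> A" "is_ret A h" "(h, lf i) \<in> A"
    using assms(1) unfolding ret_cherry_at_def by blast
  then have parents: "{p. (p, lf j) \<in> A} = {w}" "{p. (p, lf i) \<in> A} = {h}"
    using single_parent lf_leaf by blast+
  from assms(2) consider "(u, lf j) \<in> A" | "(u, lf i) \<in> A" "is_tree_node A u"
    unfolding ret_cherry_at_def by blast
  then show ?thesis
  proof cases
    case 2
    then have "u = h" using parents(2) by blast
    with 2 \<open>is_ret A h\<close> show ?thesis using node_kinds_disjoint by blast
  qed (use parents(1) in blast)
qed

lemma mu_ordered_if_ret_cherry_at:
  assumes "ret_cherry_at A X lf w i j" "x \<noteq> lf i" "x \<noteq> lf j"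
  shows "mu x i \<le> mu x 0 \<and> mu x j \<le> mu x i"
proof -
  obtain h where ij: "i \<in> X" "j \<in> X" and "(w, lf j) \<in> A" "(w, h) \<in> A" "is_ret A h" "(h, lf i) \<in> A"
    using assms(1) unfolding ret_cherry_at_def by blast
  moreover have "{p. (p, lf j) \<in> A} = {w}" "{p. (p, lf i) \<in> A} = {h}"
    using calculation single_parent lf_leaf by blast+
  ultimately have "mu x i = npaths A x h" "mu x j = npaths A x w" "h \<in> VH V A"
    using assms(2,3) mu_label npaths_unfold_predecessors[OF finite_A acyclic_A] arc_in_V
    by (auto simp: VH_def)
  then show ?thesis
    using npaths_le_mu_zero npaths_mono_arc[OF finite_A acyclic_A \<open>(w, h) \<in> A\<close>] by simp
qed

lemma ret_cherry_mset_if_ret_cherry_at: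
  assumes "ret_cherry_at A X lf w i j" "i \<noteq> j"
  shows "ret_cherry_mset n (mu_rep n V A X lf) i j"
proof -
  have "w \<in> VT V A"
    using assms(1) arc_in_V unfolding ret_cherry_at_def VT_def by blast
  then have "{u \<in> VT V A. mu u = delta n {0, i, j}} = {w}"
    using mu_ret_cherry_at[OF assms] ret_cherry_at_if_mu_eq_delta
      ret_cherry_at_unique[OF assms(1)] by blast
  moreover have "mu x i \<le> mu x 0 \<and> mu x j \<le> mu x i"
    if "mu x \<noteq> delta n {i}" "mu x \<noteq> delta n {j}" for x
  proof (rule mu_ordered_if_ret_cherry_at[OF assms(1)])
    have "i \<in> X" "j \<in> X" using assms(1) unfolding ret_cherry_at_def by blast+
    then show "x \<noteq> lf i" "x \<noteq> lf j" using that mu_leaf by auto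
  qed
  ultimately show ?thesis
    unfolding ret_cherry_mset_def count_mu_rep by (auto simp: mu_rep_def)
qed

lemma not_ret_cherry_mset_if_ret_cherry_at_swapped:
  assumes "ret_cherry_at A X lf u j i" "i \<noteq> j"
  shows "\<not> ret_cherry_mset n (mu_rep n V A X lf) i j"
proof
  assume rc: "ret_cherry_mset n (mu_rep n V A X lf) i j"
  obtain h where ij: "i \<in> X" "j \<in> X" and u: "is_tree_node A u" "(u, lf i) \<in> A" "(u, h) \<in> A"
    and h: "is_ret A h" "(h, lf j) \<in> A"
    using assms(1) unfolding ret_cherry_at_def by blast
  obtain q where q: "q \<noteq> u" "{p. (p, h) \<in> A} = {u, q}"
    using ret_other_parent[OF h(1) u(3)] .
  then have qh: "(q, h) \<in> A" by blast
  obtain r where r: "r \<in> V" "is_root A r" using unique_root by blast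
  then obtain t where "(r, t) \<in> A" using has_child node_kinds_disjoint by blast
  then have t: "{v. (r, v) \<in> A} = {t}" using single_child r(2) by blast
  have tVT: "t \<in> VT V A" using root_child_in_VT[OF r t] .
  have "q \<noteq> r"
  proof
    assume "q = r"
    then have "h = t" using t qh by blast
    with tVT h(1) show False using node_kinds_disjoint by (auto simp: VT_def)
  qed
  then have reach: "(t, u) \<in> A\<^sup>*" "(t, q) \<in> A\<^sup>*"
    using root_child_reaches[OF r t] u(1,3) r(2) qh arc_in_V node_kinds_disjoint by blast+
  have "\<not> is_leaf A t" using leaf_rtrancl[of t u] reach(1) u(1) node_kinds_disjoint by blast
  then have "t \<noteq> lf i" "t \<noteq> lf j" "t \<noteq> h"
    using tVT lf_leaf ij h(1) node_kinds_disjoint by (auto simp: VT_def)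
  moreover have "{p. (p, lf i) \<in> A} = {u}" "{p. (p, lf j) \<in> A} = {h}"
    using u(2) h(2) single_parent lf_leaf ij by blast+
  ultimately have mu_t: "mu t i = npaths A t u" "mu t j = npaths A t h"
    "npaths A t h = npaths A t u + npaths A t q"
    using ij q mu_label npaths_unfold_predecessors[OF finite_A acyclic_A] by auto
  have "0 < npaths A t q" using reach(2) npaths_pos_iff_rtrancl[OF finite_A acyclic_A] by blast
  moreover have "npaths A t h \<le> mu t 0"
    using npaths_le_mu_zero h(1) u(3) arc_in_V by (simp add: VH_def)
  ultimately have "mu t \<noteq> delta n {i}" "mu t \<noteq> delta n {j}"
    using mu_t assms(2) label_range[OF ij(2)] by (auto simp: delta_def)
  moreover have "mu t \<in># mu_rep n V A X lf"
    using tVT finite_V by (simp add: mu_rep_def VT_def)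
  ultimately have "mu t j \<le> mu t i" using rc unfolding ret_cherry_mset_def by blast
  with mu_t \<open>0 < npaths A t q\<close> show False by simp
qed

end

theorem mainTheorem4:
  fixes n :: nat and V :: "'v set" and A :: "('v \<times> 'v) set"
    and X :: "nat set" and lf :: "nat \<Rightarrow> 'v" and i j :: nat
  assumes "phylo_network n V A X lf"
    and "i \<in> {1..n}" and "j \<in> {1..n}" and "i \<noteq> j"
  shows "ret_cherry_net V A X lf i j \<longleftrightarrow> ret_cherry_mset n (mu_rep n V A X lf) i j"
proof -
  interpret phylo_net n V A X lf using assms(1) by unfold_locales
  show ?thesis
  proof
    assume "ret_cherry_net V A X lf i j"
    then obtain w where "ret_cherry_at A X lf w i j" unfolding ret_cherry_net_iff by blast
    then show "ret_cherry_mset n (mu_rep n V A X lf) i j"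
      using ret_cherry_mset_if_ret_cherry_at assms(4) by blast
  next
    assume rc: "ret_cherry_mset n (mu_rep n V A X lf) i j"
    then have "card {u \<in> VT V A. mu u = delta n {0, i, j}} = 1"
      unfolding ret_cherry_mset_def count_mu_rep by blast
    then obtain u where "u \<in> VT V A" "mu u = delta n {0, i, j}"
      by (auto simp: card_1_singleton_iff)
    then have "ret_cherry_at A X lf u i j \<or> ret_cherry_at A X lf u j i"
      by (rule ret_cherry_at_if_mu_eq_delta)
    moreover have "\<not> ret_cherry_at A X lf u j i"
      using not_ret_cherry_mset_if_ret_cherry_at_swapped assms(4) rc by blast
    ultimately show "ret_cherry_net V A X lf i j"
      unfolding ret_cherry_net_iff using assms(4) by blast
  qed
qed

end
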